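(* Let $p$ and $q$ be integers with $p$ odd and $q$ positive, and let $\omega=e^{i\pi p/q}$. Then $$\gamma(\omega)=\sum_{j=1}^{q}\omega^{j-1}\left(D_{j,q}+E_{j,p,q}\right),$$ where $$E_{j,p,q}=\log\frac{\Gamma\left(\frac{j+1}{2q}\right)\Gamma\left(\frac{j+q}{2q}\right)}{\Gamma\left(\frac{j}{2q}\right)\Gamma\left(\frac{j+q+1}{2q}\right)},\qquad D_{j,q}=\frac{1}{2q}\left[\psi\!\left(\frac12+\frac{j}{2q}\right)-\psi\!\left(\frac{j}{2q}\right)\right].$$
   Context: $\gamma(z)=\sum_{n=1}^{\infty} z^{n-1}\left(\frac{1}{n}-\log\frac{n+1}{n}\right)$ for $|z|\le1$. $\Gamma$ is Euler's gamma function and $\psi=\Gamma'/\Gamma$ is the digamma function. *)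

theory Defs
  imports "HOL-Analysis.Analysis"
begin

text \<open>Terms of the series gamma(z) = sum_{n>=1} z^(n-1) (1/n - log((n+1)/n)),
  reindexed from 0 (index m = n - 1).\<close>
definition gamma_term :: "complex \<Rightarrow> nat \<Rightarrow> complex" where
  "gamma_term z m = z ^ m * complex_of_real (1 / real (m + 1) - ln (real (m + 2) / real (m + 1)))"

definition gamma_fun :: "complex \<Rightarrow> complex" where
  "gamma_fun z = (\<Sum>m. gamma_term z m)"

definition E_coef :: "nat \<Rightarrow> int \<Rightarrow> nat \<Rightarrow> real" where
  "E_coef j p q = ln ((Gamma ((real j + 1) / (2 * real q)) * Gamma ((real j + real q) / (2 * real q)))
      / (Gamma (real j / (2 * real q)) * Gamma ((real j + real q + 1) / (2 * real q))))"

definition D_coef :: "nat \<Rightarrow> nat \<Rightarrow> real" where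
  "D_coef j q = (1 / (2 * real q)) * (Digamma (1/2 + real j / (2 * real q)) - Digamma (real j / (2 * real q)))"

end

theory Submission
  imports Defs
begin

(* Since omega^q = -1, grouping the series into blocks of 2q terms gives
   gamma(omega) = sum_{j=1..q} omega^(j-1) sum_k (c(2qk + j) - c(2qk + q + j)),  c(x) = 1/x - log((x+1)/x).
   Writing x = 2q(k + a), each difference splits into (1/(k+a) - 1/(k+a+1/2)) / 2q, which sums over k
   to a difference of digamma values, plus the logarithm of a quotient of four linear factors in k,
   whose partial products are quotients of Pochhammer symbols and converge to a quotient of Gamma
   values by Euler's limit formula. *)

lemma Digamma_diff_sums:
  fixes a b :: "'a :: {real_normed_field,banach}"
  assumes "a \<noteq> 0" "b \<noteq> 0"
  shows "(\<lambda>k. inverse (a + of_nat k) - inverse (b + of_nat k)) sums (Digamma b - Digamma a)"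
proof -
  have "(\<lambda>k. inverse (of_nat (Suc k)) - inverse (z + of_nat k)) sums (Digamma z + euler_mascheroni)"
    if "z \<noteq> 0" for z :: 'a
    using summable_Digamma[OF that] by (simp add: Digamma_def summable_sums)
  from sums_diff[OF this[OF assms(2)] this[OF assms(1)]] show ?thesis
    by simp
qed

lemma pochhammer_ratio_LIMSEQ:
  fixes a b c d :: real
  assumes pos: "a > 0" "b > 0" "c > 0" "d > 0" and "a + d = b + c"
  shows "(\<lambda>n. pochhammer a n * pochhammer d n / (pochhammer b n * pochhammer c n))
           \<longlonglongrightarrow> Gamma b * Gamma c / (Gamma a * Gamma d)"
proof -
  have "Gamma a * Gamma d \<noteq> 0"
    using pos[THEN Gamma_real_pos] by simp
  then have "(\<lambda>n. Gamma_series' b n * Gamma_series' c n / (Gamma_series' a n * Gamma_series' d n))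
               \<longlonglongrightarrow> Gamma b * Gamma c / (Gamma a * Gamma d)"
    by (intro tendsto_intros Gamma_series'_LIMSEQ) simp
  moreover have "Gamma_series' b n * Gamma_series' c n / (Gamma_series' a n * Gamma_series' d n)
      = pochhammer a n * pochhammer d n / (pochhammer b n * pochhammer c n)" for n
  proof -
    have "exp (b * ln n) * exp (c * ln n) = exp (a * ln n) * exp (d * ln n)"
      by (simp add: exp_add[symmetric] assms(5) flip: distrib_right)
    moreover have "pochhammer x n > 0" if "x > 0" for x :: real
      using that by (rule pochhammer_pos)
    ultimately show ?thesis
      using pos unfolding Gamma_series'_def by (simp add: field_simps)
  qed
  ultimately show ?thesis by simp
qed

lemma sums_ln_Gamma_quotient:
  fixes a b c d :: real
  assumes pos: "a > 0" "b > 0" "c > 0" "d > 0" and "a + d = b + c"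
  shows "(\<lambda>k. ln ((real k + a) * (real k + d) / ((real k + b) * (real k + c))))
           sums ln (Gamma b * Gamma c / (Gamma a * Gamma d))"
proof -
  have "pochhammer a n * pochhammer d n / (pochhammer b n * pochhammer c n)
      = (\<Prod>k<n. (real k + a) * (real k + d) / ((real k + b) * (real k + c)))" for n
    by (simp add: pochhammer_prod atLeast0LessThan prod_dividef prod.distrib add.commute)
  then have "(\<Sum>k<n. ln ((real k + a) * (real k + d) / ((real k + b) * (real k + c))))
      = ln (pochhammer a n * pochhammer d n / (pochhammer b n * pochhammer c n))" for n
    using pos by (simp add: ln_prod)
  moreover have "Gamma b * Gamma c / (Gamma a * Gamma d) \<noteq> 0"
    using pos[THEN Gamma_real_pos] by simp
  ultimately show ?thesis
    unfolding sums_def using tendsto_ln[OF pochhammer_ratio_LIMSEQ[OF assms]] by simp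
qed

lemma sum_block_antiperiodic_power:
  fixes \<omega> :: "'a :: comm_ring_1"
  assumes "\<omega> ^ N = -1"
  shows "(\<Sum>m\<in>{n * (2 * N)..<n * (2 * N) + 2 * N}. \<omega> ^ m * f m)
       = (\<Sum>i<N. \<omega> ^ i * (f (n * (2 * N) + i) - f (n * (2 * N) + N + i)))"
proof -
  define b where "b = n * (2 * N)"
  have "\<omega> ^ b = ((\<omega> ^ N) ^ 2) ^ n"
    unfolding b_def by (simp only: power_mult[symmetric] ac_simps)
  then have "\<omega> ^ b = 1"
    by (simp add: assms)
  then have "\<omega> ^ (b + j) = \<omega> ^ j" and "\<omega> ^ (b + N + j) = - (\<omega> ^ j)" for j
    by (simp_all add: power_add assms)
  moreover have "(\<Sum>m\<in>{b..<b + 2 * N}. g m) = (\<Sum>i<N. g (b + i)) + (\<Sum>i<N. g (b + N + i))"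
    for g :: "nat \<Rightarrow> 'a"
  proof -
    have "(\<Sum>m\<in>{b..<b + 2 * N}. g m) = (\<Sum>m\<in>{b..<b + N}. g m) + (\<Sum>m\<in>{b + N..<b + N + N}. g m)"
      by (simp add: sum.atLeastLessThan_concat mult_2 add.assoc)
    then show ?thesis
      using sum.shift_bounds_nat_ivl[of g 0 b N] sum.shift_bounds_nat_ivl[of g 0 "b + N" N]
      by (simp add: atLeast0LessThan add.commute)
  qed
  ultimately show ?thesis
    unfolding b_def[symmetric] by (simp add: sum_subtractf sum_negf algebra_simps sum.distrib)
qed

lemma exp_pi_odd_div_power:
  fixes p :: int and N :: nat
  assumes "odd p" "N > 0"
  shows "exp (\<i> * complex_of_real (pi * of_int p / of_nat N)) ^ N = -1"
proof -
  obtain r where r: "p = 2 * r + 1"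
    using assms(1) by (rule oddE)
  have "exp (\<i> * complex_of_real (pi * of_int p / of_nat N)) ^ N
      = exp (of_nat N * (\<i> * complex_of_real (pi * of_int p / of_nat N)))"
    by (rule exp_of_nat_mult[symmetric])
  also have "of_nat N * (\<i> * complex_of_real (pi * of_int p / of_nat N)) = ((2 * of_int r + 1) * pi) * \<i>"
    using assms(2) by (simp add: r field_simps)
  also have "exp \<dots> = -1"
    by (rule exp_integer_2pi_plus1) simp
  finally show ?thesis .
qed

definition gamma_coeff :: "real \<Rightarrow> real" where
  "gamma_coeff x = 1 / x - ln ((x + 1) / x)"

lemma gamma_term_eq: "gamma_term z m = z ^ m * of_real (gamma_coeff (real (Suc m)))"
  unfolding gamma_term_def gamma_coeff_def by (simp add: add_ac)

lemma abs_gamma_coeff_le: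
  assumes "x \<ge> 1"
  shows "\<bar>gamma_coeff x\<bar> \<le> 1 / x\<^sup>2"
proof -
  have "(x + 1) / x = 1 + 1 / x"
    using assms by (simp add: field_simps)
  then have "\<bar>gamma_coeff x\<bar> = \<bar>ln (1 + 1 / x) - 1 / x\<bar>"
    unfolding gamma_coeff_def by simp
  also have "\<dots> \<le> (1 / x)\<^sup>2"
    using assms by (intro abs_ln_one_plus_x_minus_x_bound_nonneg) simp_all
  finally show ?thesis
    by (simp add: power_divide)
qed

lemma summable_gamma_term:
  assumes "norm z \<le> 1"
  shows "summable (gamma_term z)"
proof (rule summable_comparison_test')
  show "summable (\<lambda>m. 1 / real (Suc m) ^ 2)"
    using inverse_power_summable[of 2, where 'a = real]
    by (intro summable_Suc_iff[where f = "\<lambda>n. 1 / real n ^ 2", THEN iffD2])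
       (simp add: inverse_eq_divide)
  show "norm (gamma_term z m) \<le> 1 / real (Suc m) ^ 2" for m
  proof -
    have "norm (gamma_term z m) = norm z ^ m * \<bar>gamma_coeff (real (Suc m))\<bar>"
      by (simp add: gamma_term_eq norm_mult norm_power)
    also have "\<dots> \<le> 1 * (1 / real (Suc m) ^ 2)"
      using assms abs_gamma_coeff_le[of "real (Suc m)"]
      by (intro mult_mono power_le_one) simp_all
    finally show ?thesis by simp
  qed
qed

lemma gamma_coeff_scaled_diff:
  assumes "s > 0" "u > 0" "v > 0"
  shows "gamma_coeff (s * u) - gamma_coeff (s * v)
       = (1 / u - 1 / v) / s + ln (u * (v + 1 / s) / ((u + 1 / s) * v))"
proof -
  have shifted_pos: "u + 1 / s > 0" "v + 1 / s > 0"
    using assms by (auto intro: add_pos_pos)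
  have "(s * w + 1) / (s * w) = (w + 1 / s) / w" for w
    using assms by (simp add: field_simps)
  then have "gamma_coeff (s * u) - gamma_coeff (s * v)
      = (1 / (s * u) - 1 / (s * v)) + (ln ((v + 1 / s) / v) - ln ((u + 1 / s) / u))"
    unfolding gamma_coeff_def by simp
  also have "1 / (s * u) - 1 / (s * v) = (1 / u - 1 / v) / s"
    by (simp add: diff_divide_distrib mult.commute)
  also have "ln ((v + 1 / s) / v) - ln ((u + 1 / s) / u) = ln (u * (v + 1 / s) / ((u + 1 / s) * v))"
    using assms shifted_pos by (simp add: ln_div ln_mult)
  finally show ?thesis .
qed

lemma gamma_coeff_scaled_diff_sums:
  fixes s a b :: real
  assumes "s > 0" "a > 0" "b > 0"
  shows "(\<lambda>k. gamma_coeff (s * (real k + a)) - gamma_coeff (s * (real k + b)))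
           sums ((Digamma b - Digamma a) / s + ln (Gamma (a + 1 / s) * Gamma b / (Gamma a * Gamma (b + 1 / s))))"
proof -
  have "(\<lambda>k. (1 / (real k + a) - 1 / (real k + b)) / s) sums ((Digamma b - Digamma a) / s)"
    using Digamma_diff_sums[of a b] assms
    by (intro sums_divide) (simp add: add.commute inverse_eq_divide)
  moreover have "(\<lambda>k. ln ((real k + a) * (real k + (b + 1 / s)) / ((real k + (a + 1 / s)) * (real k + b))))
      sums ln (Gamma (a + 1 / s) * Gamma b / (Gamma a * Gamma (b + 1 / s)))"
    using assms by (intro sums_ln_Gamma_quotient) (simp_all add: add_pos_pos)
  moreover have "gamma_coeff (s * (real k + a)) - gamma_coeff (s * (real k + b))
      = (1 / (real k + a) - 1 / (real k + b)) / s
        + ln ((real k + a) * (real k + (b + 1 / s)) / ((real k + (a + 1 / s)) * (real k + b)))" for k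
    using assms by (subst gamma_coeff_scaled_diff) (simp_all add: add.assoc add_pos_pos)
  ultimately show ?thesis
    by (simp add: sums_add)
qed

lemma sums_D_coef_plus_E_coef:
  fixes Q j :: nat and p :: int
  assumes "Q > 0" "j > 0"
  shows "(\<lambda>k. gamma_coeff (real (2 * Q * k + j)) - gamma_coeff (real (2 * Q * k + Q + j)))
           sums (D_coef j Q + E_coef j p Q)"
proof -
  define s a b where "s = 2 * real Q" and "a = real j / s" and "b = (real j + real Q) / s"
  have "s > 0" "a > 0" "b > 0"
    using assms by (simp_all add: s_def a_def b_def)
  have "b = 1 / 2 + a"
    using \<open>s > 0\<close> by (simp add: s_def a_def b_def field_simps)
  have "a + 1 / s = (real j + 1) / (2 * real Q)" "b + 1 / s = (real j + real Q + 1) / (2 * real Q)"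
    by (simp_all add: s_def a_def b_def add_divide_distrib)
  have "real (2 * Q * k + j) = s * (real k + a)" "real (2 * Q * k + Q + j) = s * (real k + b)" for k
    using \<open>s > 0\<close> by (simp_all add: s_def a_def b_def field_simps)
  moreover have "D_coef j Q = (Digamma b - Digamma a) / s"
    unfolding D_coef_def \<open>b = 1 / 2 + a\<close> by (simp add: s_def a_def)
  moreover have "E_coef j p Q = ln (Gamma (a + 1 / s) * Gamma b / (Gamma a * Gamma (b + 1 / s)))"
    unfolding E_coef_def \<open>a + 1 / s = _\<close> \<open>b + 1 / s = _\<close> by (simp add: s_def a_def b_def)
  ultimately show ?thesis
    using gamma_coeff_scaled_diff_sums[OF \<open>s > 0\<close> \<open>a > 0\<close> \<open>b > 0\<close>] by simp
qed

lemma gamma_fun_grouped_sums: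
  fixes \<omega> :: complex
  assumes "\<omega> ^ Q = -1"
  shows "(\<lambda>k. \<Sum>i<Q. \<omega> ^ i * of_real (gamma_coeff (real (2 * Q * k + Suc i))
                                    - gamma_coeff (real (2 * Q * k + Q + Suc i)))) sums gamma_fun \<omega>"
proof -
  have "Q > 0"
    using assms by (rule contrapos_pp) simp
  moreover have "\<omega> ^ (Q * 2) = 1"
    using assms by (simp add: power_mult)
  ultimately have "norm \<omega> = 1"
    by (auto dest: power_eq_1_iff)
  then have "(\<lambda>k. \<Sum>m\<in>{k * (2 * Q)..<k * (2 * Q) + 2 * Q}. gamma_term \<omega> m) sums gamma_fun \<omega>"
    unfolding gamma_fun_def using \<open>Q > 0\<close> by (intro sums_group summable_sums summable_gamma_term) simp_all
  also have "(\<lambda>k. \<Sum>m\<in>{k * (2 * Q)..<k * (2 * Q) + 2 * Q}. gamma_term \<omega> m)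
      = (\<lambda>k. \<Sum>i<Q. \<omega> ^ i * of_real (gamma_coeff (real (2 * Q * k + Suc i))
                                      - gamma_coeff (real (2 * Q * k + Q + Suc i))))"
    unfolding gamma_term_eq sum_block_antiperiodic_power[OF assms] by (simp add: ac_simps)
  finally show ?thesis .
qed

theorem corollary31:
  fixes p q :: int
  assumes "odd p" and "q > 0"
  defines "\<omega> \<equiv> exp (\<i> * complex_of_real (pi * real_of_int p / real_of_int q))"
  shows "summable (gamma_term \<omega>) \<and>
    gamma_fun \<omega> = (\<Sum>j=1..nat q. \<omega> ^ (j - 1) *
        complex_of_real (D_coef j (nat q) + E_coef j p (nat q)))"
proof -
  define Q where "Q = nat q"
  have "Q > 0"
    using assms(2) by (simp add: Q_def)
  have \<omega>_Q: "\<omega> = exp (\<i> * complex_of_real (pi * of_int p / of_nat Q))"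
    using assms(2) by (simp add: \<omega>_def Q_def)
  have "summable (gamma_term \<omega>)"
    by (rule summable_gamma_term) (simp add: \<omega>_Q)
  have "\<omega> ^ Q = -1"
    unfolding \<omega>_Q using assms(1) \<open>Q > 0\<close> by (rule exp_pi_odd_div_power)
  then have "(\<lambda>k. \<Sum>i<Q. \<omega> ^ i * of_real (gamma_coeff (real (2 * Q * k + Suc i))
                                      - gamma_coeff (real (2 * Q * k + Q + Suc i)))) sums gamma_fun \<omega>"
    (is "?grouped sums _")
    by (rule gamma_fun_grouped_sums)
  moreover have "?grouped sums (\<Sum>i<Q. \<omega> ^ i * of_real (D_coef (Suc i) Q + E_coef (Suc i) p Q))"
    using \<open>Q > 0\<close> by (intro sums_sum sums_mult sums_of_real sums_D_coef_plus_E_coef) simp_all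
  ultimately have "gamma_fun \<omega> = (\<Sum>i<Q. \<omega> ^ i * of_real (D_coef (Suc i) Q + E_coef (Suc i) p Q))"
    by (rule sums_unique2)
  with \<open>summable (gamma_term \<omega>)\<close> show ?thesis
    unfolding Q_def by (simp add: sum.atLeast1_atMost_eq)
qed

end
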